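(* Let $x,y\in V(D^+)\setminus\{s\}$ with $y\prec x$ and $y\notin F$. Then $g(x,u)=\infty$ for every $u\in C(y)$.
   Context: $G=(V,E,w)$ is a simple, connected, undirected graph with positive edge lengths, $s,t\in V$, $d(\cdot,\cdot)$ the shortest path distance in $G$. $D$ is the union of all shortest $st$-paths of $G$, and $D^+$ is the directed acyclic graph obtained from $D$ by orienting every edge toward $t$. $x\prec y$ means $x$ is an ancestor of $y$ in $D^+$ (a directed path of positive length from $x$ to $y$ exists). For $x\neq s$, $v\neq x$ is an $s$-dominator of $x$ if every directed path from $s$ to $x$ in $D^+$ contains $v$, and $I_s(x)$ is the $s$-dominator of $x$ closest to $x$ (every other $s$-dominator of $x$ is an $s$-dominator of $I_s(x)$). Symmetrically, for $x\neq t$, $v\neq x$ is a $t$-dominator of $x$ if every directed path from $x$ to $t$ in $D^+$ contains $v$, and $I_t(x)$ is the $t$-dominator closest to $x$. For $x\neq s$, $C(x)=\{v: I_s(x)\prec v\prec x\}$. For $x\neq s$ and $y\in V(D^+)$, $g(x,y)=d(y,x)$ if $y\in C(x)$ and $x\prec I_t(y)$, and $g(x,y)=\infty$ otherwise; $g^*(x)=\min_y g(x,y)$. $F=\{x\in V(D^+)\setminus\{s\}: g^*(x)\neq\infty\}$. *)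

theory Defs
  imports Main "HOL-Library.Extended_Real"
begin

definition wgraph :: "'a set \<Rightarrow> ('a \<times> 'a) set \<Rightarrow> ('a \<Rightarrow> 'a \<Rightarrow> real) \<Rightarrow> bool" where
  "wgraph V E w \<longleftrightarrow> finite V \<and> E \<subseteq> V \<times> V \<and> sym E \<and> (\<forall>v. (v, v) \<notin> E)
     \<and> (\<forall>u v. (u, v) \<in> E \<longrightarrow> w u v > 0 \<and> w u v = w v u)"

definition walk :: "('a \<times> 'a) set \<Rightarrow> 'a list \<Rightarrow> bool" where
  "walk E p \<longleftrightarrow> p \<noteq> [] \<and> (\<forall>i. Suc i < length p \<longrightarrow> (p ! i, p ! Suc i) \<in> E)"

definition walk_len :: "('a \<Rightarrow> 'a \<Rightarrow> real) \<Rightarrow> 'a list \<Rightarrow> real" where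
  "walk_len w p = sum_list (map (\<lambda>(a, b). w a b) (zip p (tl p)))"

definition connected_graph :: "'a set \<Rightarrow> ('a \<times> 'a) set \<Rightarrow> bool" where
  "connected_graph V E \<longleftrightarrow> (\<forall>u\<in>V. \<forall>v\<in>V. \<exists>p. walk E p \<and> hd p = u \<and> last p = v)"

definition dist_G :: "('a \<times> 'a) set \<Rightarrow> ('a \<Rightarrow> 'a \<Rightarrow> real) \<Rightarrow> 'a \<Rightarrow> 'a \<Rightarrow> real" where
  "dist_G E w u v = Inf {walk_len w p | p. walk E p \<and> hd p = u \<and> last p = v}"

definition shortest_st_path :: "('a \<times> 'a) set \<Rightarrow> ('a \<Rightarrow> 'a \<Rightarrow> real) \<Rightarrow> 'a \<Rightarrow> 'a \<Rightarrow> 'a list \<Rightarrow> bool" where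
  "shortest_st_path E w s t p \<longleftrightarrow> walk E p \<and> distinct p \<and> hd p = s \<and> last p = t
     \<and> walk_len w p = dist_G E w s t"

text \<open>D^+: the union of all shortest s-t paths, each edge oriented toward t
(i.e. in the direction in which it is traversed by a shortest s-t path).\<close>
definition Dverts :: "('a \<times> 'a) set \<Rightarrow> ('a \<Rightarrow> 'a \<Rightarrow> real) \<Rightarrow> 'a \<Rightarrow> 'a \<Rightarrow> 'a set" where
  "Dverts E w s t = {v. \<exists>p. shortest_st_path E w s t p \<and> v \<in> set p}"

definition Darcs :: "('a \<times> 'a) set \<Rightarrow> ('a \<Rightarrow> 'a \<Rightarrow> real) \<Rightarrow> 'a \<Rightarrow> 'a \<Rightarrow> ('a \<times> 'a) set" where
  "Darcs E w s t = {(p ! i, p ! Suc i) | p i. shortest_st_path E w s t p \<and> Suc i < length p}"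

definition anc :: "('a \<times> 'a) set \<Rightarrow> ('a \<Rightarrow> 'a \<Rightarrow> real) \<Rightarrow> 'a \<Rightarrow> 'a \<Rightarrow> 'a \<Rightarrow> 'a \<Rightarrow> bool" where
  "anc E w s t x y \<longleftrightarrow> (x, y) \<in> (Darcs E w s t)\<^sup>+"

definition dpath :: "('a \<times> 'a) set \<Rightarrow> ('a \<Rightarrow> 'a \<Rightarrow> real) \<Rightarrow> 'a \<Rightarrow> 'a \<Rightarrow> 'a list \<Rightarrow> bool" where
  "dpath E w s t p \<longleftrightarrow> p \<noteq> [] \<and> (\<forall>i. Suc i < length p \<longrightarrow> (p ! i, p ! Suc i) \<in> Darcs E w s t)"

definition sdom :: "('a \<times> 'a) set \<Rightarrow> ('a \<Rightarrow> 'a \<Rightarrow> real) \<Rightarrow> 'a \<Rightarrow> 'a \<Rightarrow> 'a \<Rightarrow> 'a \<Rightarrow> bool" where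
  "sdom E w s t v x \<longleftrightarrow> v \<noteq> x \<and>
     (\<forall>p. dpath E w s t p \<and> hd p = s \<and> last p = x \<longrightarrow> v \<in> set p)"

definition tdom :: "('a \<times> 'a) set \<Rightarrow> ('a \<Rightarrow> 'a \<Rightarrow> real) \<Rightarrow> 'a \<Rightarrow> 'a \<Rightarrow> 'a \<Rightarrow> 'a \<Rightarrow> bool" where
  "tdom E w s t v x \<longleftrightarrow> v \<noteq> x \<and>
     (\<forall>p. dpath E w s t p \<and> hd p = x \<and> last p = t \<longrightarrow> v \<in> set p)"

definition Is :: "('a \<times> 'a) set \<Rightarrow> ('a \<Rightarrow> 'a \<Rightarrow> real) \<Rightarrow> 'a \<Rightarrow> 'a \<Rightarrow> 'a \<Rightarrow> 'a" where
  "Is E w s t x = (THE v. sdom E w s t v x \<and>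
      (\<forall>u. sdom E w s t u x \<and> u \<noteq> v \<longrightarrow> sdom E w s t u v))"

definition It :: "('a \<times> 'a) set \<Rightarrow> ('a \<Rightarrow> 'a \<Rightarrow> real) \<Rightarrow> 'a \<Rightarrow> 'a \<Rightarrow> 'a \<Rightarrow> 'a" where
  "It E w s t x = (THE v. tdom E w s t v x \<and>
      (\<forall>u. tdom E w s t u x \<and> u \<noteq> v \<longrightarrow> tdom E w s t u v))"

definition Cset :: "('a \<times> 'a) set \<Rightarrow> ('a \<Rightarrow> 'a \<Rightarrow> real) \<Rightarrow> 'a \<Rightarrow> 'a \<Rightarrow> 'a \<Rightarrow> 'a set" where
  "Cset E w s t x = {v. anc E w s t (Is E w s t x) v \<and> anc E w s t v x}"

definition gfun :: "('a \<times> 'a) set \<Rightarrow> ('a \<Rightarrow> 'a \<Rightarrow> real) \<Rightarrow> 'a \<Rightarrow> 'a \<Rightarrow> 'a \<Rightarrow> 'a \<Rightarrow> ereal" where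
  "gfun E w s t x y = (if y \<in> Cset E w s t x \<and> anc E w s t x (It E w s t y)
                        then ereal (dist_G E w y x) else \<infinity>)"

definition gstar :: "('a \<times> 'a) set \<Rightarrow> ('a \<Rightarrow> 'a \<Rightarrow> real) \<Rightarrow> 'a \<Rightarrow> 'a \<Rightarrow> 'a \<Rightarrow> ereal" where
  "gstar E w s t x = (INF y \<in> Dverts E w s t. gfun E w s t x y)"

definition Fset :: "('a \<times> 'a) set \<Rightarrow> ('a \<Rightarrow> 'a \<Rightarrow> real) \<Rightarrow> 'a \<Rightarrow> 'a \<Rightarrow> 'a set" where
  "Fset E w s t = {x \<in> Dverts E w s t - {s}. gstar E w s t x \<noteq> \<infinity>}"

end

theory Submission
  imports Defs
begin

text \<open>If \<open>g(x,u)\<close> were finite for some \<open>u \<in> C(y)\<close>, then \<open>x \<prec> I\<^sub>t(u)\<close>, and with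
  \<open>y \<prec> x\<close> also \<open>y \<prec> I\<^sub>t(u)\<close>; hence \<open>g(y,u) = d(u,y)\<close> would be finite, so
  \<open>g\<^sup>*(y) \<noteq> \<infinity>\<close> and \<open>y \<in> F\<close>.\<close>

lemma anc_trans:
  assumes "anc E w s t a b" and "anc E w s t b c"
  shows "anc E w s t a c"
  using assms unfolding anc_def by (rule trancl_trans)

lemma anc_target_in_Dverts:
  assumes "anc E w s t a u"
  shows "u \<in> Dverts E w s t"
proof -
  from assms obtain z where "(z, u) \<in> Darcs E w s t"
    unfolding anc_def by (blast elim: tranclE)
  then obtain p i where "u = p ! Suc i" "shortest_st_path E w s t p" "Suc i < length p"
    by (auto simp: Darcs_def)
  then show ?thesis
    unfolding Dverts_def by auto
qed

lemma Cset_subset_Dverts: "Cset E w s t x \<subseteq> Dverts E w s t"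
  unfolding Cset_def using anc_target_in_Dverts by fast

lemma gfun_eq_infinity_iff:
  "gfun E w s t x u = \<infinity> \<longleftrightarrow> \<not> (u \<in> Cset E w s t x \<and> anc E w s t x (It E w s t u))"
  by (simp add: gfun_def)

lemma gfun_eq_infinity_if_notin_Fset:
  assumes "x \<in> Dverts E w s t - {s}" and "x \<notin> Fset E w s t" and "u \<in> Dverts E w s t"
  shows "gfun E w s t x u = \<infinity>"
proof -
  have "gstar E w s t x = \<infinity>"
    using assms(1,2) by (simp add: Fset_def)
  moreover have "gstar E w s t x \<le> gfun E w s t x u"
    unfolding gstar_def using assms(3) by (rule INF_lower)
  ultimately show ?thesis
    by simp
qed

theorem lemma8:
  fixes V :: "'a set" and E :: "('a \<times> 'a) set" and w :: "'a \<Rightarrow> 'a \<Rightarrow> real"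
    and s t x y :: 'a
  assumes "wgraph V E w" and "connected_graph V E" and "s \<in> V" and "t \<in> V"
    and "x \<in> Dverts E w s t - {s}" and "y \<in> Dverts E w s t - {s}"
    and "anc E w s t y x" and "y \<notin> Fset E w s t"
  shows "\<forall>u \<in> Cset E w s t y. gfun E w s t x u = \<infinity>"
proof
  fix u assume u: "u \<in> Cset E w s t y"
  then have "u \<in> Dverts E w s t"
    by (rule subsetD[OF Cset_subset_Dverts])
  then have "gfun E w s t y u = \<infinity>"
    by (rule gfun_eq_infinity_if_notin_Fset[OF assms(6,8)])
  with u have "\<not> anc E w s t y (It E w s t u)"
    by (simp add: gfun_eq_infinity_iff)
  then have "\<not> anc E w s t x (It E w s t u)"
    using assms(7) anc_trans by metis
  then show "gfun E w s t x u = \<infinity>"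
    by (simp add: gfun_eq_infinity_iff)
qed

end
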